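(* Let $F:(M_1,g_1)\to(M_2,g_2)$ be a Riemannian submersion with $\dim M_1=n$, $\dim M_2=m$ and fibre dimension $r=\dim\mathcal V_p>2$, and let $p\in M_1$. Then $$\hat\delta^{\mathcal V}(2)(p)\;\ge\;\tau^{M_1}_{\mathcal V}(p)-\sup\{K^{M_1}_{\mathcal V}(\Pi):\Pi\subset\mathcal V_p,\ \dim\Pi=2\}-\frac{r^2(r-2)}{2(r-1)}\|H\|^2 .$$
   Context: Let $(M_1,g_1)$, $(M_2,g_2)$ be Riemannian manifolds, $\dim M_1=n$, $\dim M_2=m$, and $F:M_1\to M_2$ a Riemannian submersion (a surjective smooth map whose differential $F_{*p}$ is surjective at every $p$ and preserves the length of horizontal vectors). Write $\mathcal V=\ker F_*$ (vertical distribution), $\mathcal H=(\ker F_* )^\perp$ (horizontal distribution), $r=\dim\mathcal V_p=n-m$, $s=\dim\mathcal H_p=m$; $v,h$ denote the orthogonal projections onto $\mathcal V,\mathcal H$, and $\nabla$ the Levi-Civita connection of $g_1$. O'Neill's tensor: $\mathcal T_EF=h\nabla_{vE}vF+v\nabla_{vE}hF$. Curvature convention: $R^{M_1}(X,Y,Z,W)=g_1(R^{M_1}(X,Y)Z,W)$, normalized so that $R^{M_1}(X,Y,Y,X)$ is the sectional curvature of the plane spanned by orthonormal $X,Y$. The curvature $R^{\ker F_*}$ of the fibres is related to $R^{M_1}$ (as used in the paper) by: for vertical $F_1,\dots,F_4$, $R^{M_1}(F_1,F_2,F_3,F_4)=R^{\ker F_*}(F_1,F_2,F_3,F_4)+g_1(\mathcal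 T_{F_1}F_4,\mathcal T_{F_2}F_3)-g_1(\mathcal T_{F_2}F_4,\mathcal T_{F_1}F_3)$. For an orthonormal basis $\{V_1,\dots,V_r\}$ of $\mathcal V_p$: $H=\frac1r\sum_{i=1}^r\mathcal T_{V_i}V_i$ (mean curvature vector of the fibres); $\tau^{\ker F_*}_{\mathcal V}(p)=\frac12\sum_{i,j=1}^rR^{\ker F_*}(V_i,V_j,V_j,V_i)$, $\tau^{M_1}_{\mathcal V}(p)=\frac12\sum_{i,j=1}^rR^{M_1}(V_i,V_j,V_j,V_i)$. For a $2$-plane $\Pi\subset\mathcal V_p$ with orthonormal basis $\{V_1,V_2\}$: $K^{\ker F_*}_{\mathcal V}(\Pi)=R^{\ker F_*}(V_1,V_2,V_2,V_1)$, $K^{M_1}_{\mathcal V}(\Pi)=R^{M_1}(V_1,V_2,V_2,V_1)$. Finally $\hat\delta^{\mathcal V}(2)(p)=\tau^{\ker F_*}_{\mathcal V}(p)-\sup\{K^{\ker F_*}_{\mathcal V}(\Pi):\Pi\subset\mathcal V_p,\ \dim\Pi=2\}$. *)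

theory Defs
  imports "HOL-Analysis.Analysis"
begin

text \<open>Pointwise (tensor-algebraic) model of a Riemannian submersion at a point p.
  The tangent space T_p M1 is modelled by a Euclidean space 'a (inner product = g1 at p),
  the vertical space V_p by a linear subspace Vp, the horizontal space is its orthogonal
  complement.  O'Neill's tensor T (restricted to the point p) is a bilinear map, and
  the curvature R^{M1} at p is a 4-linear form with the algebraic curvature symmetries.\<close>

definition quadrilinear :: "('a::real_vector \<Rightarrow> 'a \<Rightarrow> 'a \<Rightarrow> 'a \<Rightarrow> real) \<Rightarrow> bool" where
  "quadrilinear R \<longleftrightarrow>
     (\<forall>y z w. linear (\<lambda>x. R x y z w)) \<and> (\<forall>x z w. linear (\<lambda>y. R x y z w)) \<and>
     (\<forall>x y w. linear (\<lambda>z. R x y z w)) \<and> (\<forall>x y z. linear (\<lambda>w. R x y z w))"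

definition curvature_like :: "('a::real_vector \<Rightarrow> 'a \<Rightarrow> 'a \<Rightarrow> 'a \<Rightarrow> real) \<Rightarrow> bool" where
  "curvature_like R \<longleftrightarrow> quadrilinear R \<and>
     (\<forall>x y z w. R x y z w = - R y x z w) \<and>
     (\<forall>x y z w. R x y z w = - R x y w z) \<and>
     (\<forall>x y z w. R x y z w = R z w x y) \<and>
     (\<forall>x y z w. R x y z w + R y z x w + R z x y w = 0)"

definition orthonormal_basis_of :: "'a::euclidean_space set \<Rightarrow> nat \<Rightarrow> (nat \<Rightarrow> 'a) \<Rightarrow> bool" where
  "orthonormal_basis_of Vp r e \<longleftrightarrow> r = dim Vp \<and> (\<forall>i<r. e i \<in> Vp) \<and>
     (\<forall>i<r. \<forall>j<r. inner (e i) (e j) = (if i = j then 1 else 0))"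

text \<open>Curvature of the fibres via the Gauss-type relation given in the paper:
  R^{M1}(F1,F2,F3,F4) = R^{ker}(F1,F2,F3,F4) + g(T_{F1}F4, T_{F2}F3) - g(T_{F2}F4, T_{F1}F3).\<close>
definition Rker :: "('a::real_inner \<Rightarrow> 'a \<Rightarrow> 'a \<Rightarrow> 'a \<Rightarrow> real) \<Rightarrow> ('a \<Rightarrow> 'a \<Rightarrow> 'a)
                     \<Rightarrow> 'a \<Rightarrow> 'a \<Rightarrow> 'a \<Rightarrow> 'a \<Rightarrow> real" where
  "Rker R T x y z w = R x y z w - inner (T x w) (T y z) + inner (T y w) (T x z)"

definition mean_curv :: "('a::real_vector \<Rightarrow> 'a \<Rightarrow> 'a) \<Rightarrow> nat \<Rightarrow> (nat \<Rightarrow> 'a) \<Rightarrow> 'a" where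
  "mean_curv T r e = (1 / real r) *\<^sub>R (\<Sum>i<r. T (e i) (e i))"

definition tau_V :: "('a \<Rightarrow> 'a \<Rightarrow> 'a \<Rightarrow> 'a \<Rightarrow> real) \<Rightarrow> nat \<Rightarrow> (nat \<Rightarrow> 'a) \<Rightarrow> real" where
  "tau_V R r e = (1/2) * (\<Sum>i<r. \<Sum>j<r. R (e i) (e j) (e j) (e i))"

definition sup_K_V :: "('a::real_inner \<Rightarrow> 'a \<Rightarrow> 'a \<Rightarrow> 'a \<Rightarrow> real) \<Rightarrow> 'a set \<Rightarrow> real" where
  "sup_K_V R Vp = Sup {R u v v u | u v. u \<in> Vp \<and> v \<in> Vp \<and> norm u = 1 \<and> norm v = 1 \<and> inner u v = 0}"

definition delta_hat_V2 :: "('a::real_inner \<Rightarrow> 'a \<Rightarrow> 'a \<Rightarrow> 'a \<Rightarrow> real) \<Rightarrow> ('a \<Rightarrow> 'a \<Rightarrow> 'a)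
                             \<Rightarrow> 'a set \<Rightarrow> nat \<Rightarrow> (nat \<Rightarrow> 'a) \<Rightarrow> real" where
  "delta_hat_V2 R T Vp r e = tau_V (Rker R T) r e - sup_K_V (Rker R T) Vp"

end

theory Submission
  imports Defs
begin

(* By the Gauss relation, Rker(u,v,v,u) = R(u,v,v,u) - <T u u, T v v> + |T u v|^2 and
   tau(Rker) = tau(R) - r^2 |H|^2 / 2 + |T|^2 / 2, where |T|^2 is the squared Hilbert-Schmidt
   norm of T on the fibre.  It therefore suffices to show, for every orthonormal pair u, v,
   |T u v|^2 - <T u u, T v v> <= |T|^2 / 2 - r^2 |H|^2 / (2 (r - 1)).
   This is Chen's argument: complete u, v to an orthonormal basis of the fibre, which leaves
   r H and |T|^2 unchanged; then apply Cauchy-Schwarz to the r - 1 vectors T u u + T v v and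
   T x x (x a further basis vector) summing to r H, and drop the off-diagonal terms of |T|^2
   other than those for the pair u, v. *)

definition orthonormal :: "'a::real_inner set \<Rightarrow> bool" where
  "orthonormal B \<longleftrightarrow> pairwise orthogonal B \<and> (\<forall>x\<in>B. norm x = 1)"

lemma orthonormal_imp_independent:
  fixes B :: "'a::euclidean_space set"
  assumes "orthonormal B"
  shows "independent B"
  using assms by (intro pairwise_orthogonal_independent) (auto simp: orthonormal_def)

lemma orthonormal_expand:
  fixes B :: "'a::euclidean_space set"
  assumes "orthonormal B" "finite B" "x \<in> span B"
  shows "x = (\<Sum>b\<in>B. (x \<bullet> b) *\<^sub>R b)"
  using orthonormal_basis_expand[of B x] assms by (simp add: orthonormal_def)

lemma trace_orthonormal_basis_independent:
  fixes T :: "'a::euclidean_space \<Rightarrow> 'a \<Rightarrow> 'b::real_vector"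
  assumes T: "bilinear T" and B: "orthonormal B" "finite B" and E: "orthonormal E" "finite E"
    and span: "span B = span E"
  shows "(\<Sum>b\<in>B. T b b) = (\<Sum>x\<in>E. T x x)"
proof -
  have lin_left: "linear (\<lambda>x. T x y)" and lin_right: "linear (T x)" for x y
    using T by (simp_all add: bilinear_def)
  have "(\<Sum>b\<in>B. T b b) = (\<Sum>b\<in>B. T (\<Sum>x\<in>E. (b \<bullet> x) *\<^sub>R x) b)"
    using orthonormal_expand[OF E] span by (intro sum.cong refl) (metis span_base)
  also have "\<dots> = (\<Sum>b\<in>B. \<Sum>x\<in>E. (x \<bullet> b) *\<^sub>R T x b)"
    by (simp add: linear_sum[OF lin_left] linear_scale[OF lin_left] inner_commute)
  also have "\<dots> = (\<Sum>x\<in>E. T x (\<Sum>b\<in>B. (x \<bullet> b) *\<^sub>R b))"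
    by (subst sum.swap) (simp add: linear_sum[OF lin_right] linear_scale[OF lin_right])
  also have "\<dots> = (\<Sum>x\<in>E. T x x)"
    using orthonormal_expand[OF B] span by (intro sum.cong refl) (metis span_base)
  finally show ?thesis .
qed

lemma linear_imp_bilinear_inner:
  fixes L :: "'a::real_vector \<Rightarrow> 'b::real_inner"
  assumes "linear L"
  shows "bilinear (\<lambda>x y. L x \<bullet> L y)"
  using assms unfolding bilinear_def
  by (auto intro!: linearI simp: linear_add linear_scale inner_add_left inner_add_right)

lemma hilbert_schmidt_orthonormal_basis_independent:
  fixes T :: "'a::euclidean_space \<Rightarrow> 'a \<Rightarrow> 'b::real_inner"
  assumes T: "bilinear T" and B: "orthonormal B" "finite B" and E: "orthonormal E" "finite E"
    and span: "span B = span E"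
  shows "(\<Sum>a\<in>B. \<Sum>b\<in>B. (norm (T a b))\<^sup>2) = (\<Sum>x\<in>E. \<Sum>y\<in>E. (norm (T x y))\<^sup>2)"
proof -
  have lin_left: "linear (\<lambda>x. T x y)" and lin_right: "linear (T x)" for x y
    using T by (simp_all add: bilinear_def)
  have "(\<Sum>a\<in>B. \<Sum>b\<in>B. T a b \<bullet> T a b) = (\<Sum>a\<in>B. \<Sum>y\<in>E. T a y \<bullet> T a y)"
    by (intro sum.cong refl trace_orthonormal_basis_independent linear_imp_bilinear_inner lin_right
        B E span)
  also have "\<dots> = (\<Sum>y\<in>E. \<Sum>x\<in>E. T x y \<bullet> T x y)"
    by (subst sum.swap, intro sum.cong refl trace_orthonormal_basis_independent
        linear_imp_bilinear_inner lin_left B E span)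
  also have "\<dots> = (\<Sum>x\<in>E. \<Sum>y\<in>E. T x y \<bullet> T x y)"
    by (rule sum.swap)
  finally show ?thesis by (simp add: power2_norm_eq_inner)
qed

lemma norm_add_sum_squared_le:
  fixes x :: "'b::real_normed_vector"
  assumes "finite I"
  shows "(norm (x + sum f I))\<^sup>2 \<le> (card I + 1) * ((norm x)\<^sup>2 + (\<Sum>i\<in>I. (norm (f i))\<^sup>2))"
proof -
  define J where "J = insert None (Some ` I)"
  define g where "g = case_option (norm x) (\<lambda>i. norm (f i))"
  have sum_J: "sum h J = h None + sum (h \<circ> Some) I" for h :: "'a option \<Rightarrow> real"
    using assms by (auto simp: J_def sum.reindex)
  have "norm (x + sum f I) \<le> norm x + (\<Sum>i\<in>I. norm (f i))"
    using norm_triangle_ineq[of x "sum f I"] norm_sum[of f I] by linarith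
  then have "(norm (x + sum f I))\<^sup>2 \<le> (sum g J)\<^sup>2"
    by (simp add: sum_J g_def o_def power_mono)
  also have "\<dots> \<le> (\<Sum>j\<in>J. (g j)\<^sup>2) * card J"
    by (rule sum_squared_le_sum_of_squares)
  also have "\<dots> = (card I + 1) * ((norm x)\<^sup>2 + (\<Sum>i\<in>I. (norm (f i))\<^sup>2))"
    using assms by (simp add: sum_J g_def o_def) (simp add: J_def card_image)
  finally show ?thesis .
qed

lemma chen_pair_inequality:
  fixes T :: "'a \<Rightarrow> 'a \<Rightarrow> 'b::real_inner"
  assumes fin: "finite B'" and uv: "u \<notin> B'" "v \<notin> B'" "u \<noteq> v" and sym: "T v u = T u v"
    and card: "card B' + 2 \<le> r"
  shows "(norm (T u v))\<^sup>2 - T u u \<bullet> T v v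
     \<le> (\<Sum>x\<in>insert u (insert v B'). \<Sum>y\<in>insert u (insert v B'). (norm (T x y))\<^sup>2) / 2
       - (norm (\<Sum>x\<in>insert u (insert v B'). T x x))\<^sup>2 / (2 * (real r - 1))"
proof -
  let ?B = "insert u (insert v B')"
  let ?n = "\<lambda>x y. (norm (T x y))\<^sup>2"
  define Y where "Y = (\<Sum>x\<in>B'. ?n x x)"
  have row_u: "(\<Sum>y\<in>?B. ?n u y) \<ge> ?n u u + ?n u v"
    using fin uv by (simp add: sum_nonneg)
  have row_v: "(\<Sum>y\<in>?B. ?n v y) \<ge> ?n u v + ?n v v"
    using fin uv sym by (simp add: sum_nonneg)
  have rows: "(\<Sum>x\<in>B'. \<Sum>y\<in>?B. ?n x y) \<ge> Y"
    unfolding Y_def using fin by (intro sum_mono member_le_sum) auto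
  have hs: "(\<Sum>x\<in>?B. \<Sum>y\<in>?B. ?n x y) \<ge> ?n u u + ?n v v + 2 * ?n u v + Y"
    using fin uv row_u row_v rows by simp
  have "(norm (\<Sum>x\<in>?B. T x x))\<^sup>2 = (norm ((T u u + T v v) + (\<Sum>x\<in>B'. T x x)))\<^sup>2"
    using fin uv by (simp add: add.assoc)
  also have "\<dots> \<le> (card B' + 1) * ((norm (T u u + T v v))\<^sup>2 + Y)"
    unfolding Y_def by (rule norm_add_sum_squared_le[OF fin])
  also have "\<dots> \<le> (real r - 1) * ((norm (T u u + T v v))\<^sup>2 + Y)"
    using card by (intro mult_right_mono) (auto simp: Y_def sum_nonneg)
  finally have "(norm (\<Sum>x\<in>?B. T x x))\<^sup>2 / (2 * (real r - 1))
      \<le> ((norm (T u u + T v v))\<^sup>2 + Y) / 2"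
    using card by (simp add: field_simps)
  moreover have "(norm (T u u + T v v))\<^sup>2 = ?n u u + ?n v v + 2 * (T u u \<bullet> T v v)"
    by (simp add: power2_norm_eq_inner inner_add_left inner_add_right inner_commute)
  ultimately show ?thesis
    using hs by (simp add: field_simps)
qed

lemma orthonormal_pair_extend:
  fixes V :: "'a::euclidean_space set"
  assumes V: "subspace V" and uv: "u \<in> V" "v \<in> V" "norm u = 1" "norm v = 1" "u \<bullet> v = 0"
  obtains B' where "finite B'" "u \<notin> B'" "v \<notin> B'" "orthonormal (insert u (insert v B'))"
    "span (insert u (insert v B')) = V"
proof -
  have uu: "u \<bullet> u = 1" and vv: "v \<bullet> v = 1" and vu: "v \<bullet> u = 0"
    using uv by (simp_all add: norm_eq_1 inner_commute)
  define W where "W = {x \<in> V. x \<bullet> u = 0 \<and> x \<bullet> v = 0}"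
  have "subspace W"
    using V unfolding subspace_def W_def by (auto simp: inner_add_left)
  then obtain B' where B': "B' \<subseteq> W" "pairwise orthogonal B'" "\<And>x. x \<in> B' \<Longrightarrow> norm x = 1"
      "independent B'" "span B' = W"
    by (metis orthonormal_basis_subspace)
  show thesis
  proof
    show "finite B'"
      using B'(4) by (rule independent_imp_finite)
    show "u \<notin> B'" "v \<notin> B'"
      using B'(1) uu vv by (auto simp: W_def)
    show "orthonormal (insert u (insert v B'))"
      using B' uv vu unfolding orthonormal_def pairwise_def orthogonal_def W_def
      by (auto simp: inner_commute)
    show "span (insert u (insert v B')) = V"
    proof
      show "span (insert u (insert v B')) \<subseteq> V"
        using B'(1,5) uv V by (intro span_minimal) (auto simp: W_def)
    next
      show "V \<subseteq> span (insert u (insert v B'))"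
      proof
        fix x assume "x \<in> V"
        define w where "w = x - (x \<bullet> u) *\<^sub>R u - (x \<bullet> v) *\<^sub>R v"
        have "w \<in> W"
          using \<open>x \<in> V\<close> uv V
          by (auto simp: W_def w_def inner_diff_left uu vv vu subspace_diff subspace_mul)
        then have "w + (x \<bullet> u) *\<^sub>R u + (x \<bullet> v) *\<^sub>R v \<in> span (insert u (insert v B'))"
          using B'(5) span_mono[of B' "insert u (insert v B')"]
          by (intro span_add span_mul) (auto intro: span_base)
        then show "x \<in> span (insert u (insert v B'))"
          by (simp add: w_def)
      qed
    qed
  qed
qed

lemma orthonormal_basis_ofD:
  assumes V: "subspace V" and e: "orthonormal_basis_of V r e"
  shows "inj_on e {..<r}" "orthonormal (e ` {..<r})" "span (e ` {..<r}) = V"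
proof -
  have e_inner: "e i \<bullet> e j = (if i = j then 1 else 0)" if "i < r" "j < r" for i j
    using e that by (simp add: orthonormal_basis_of_def)
  show inj: "inj_on e {..<r}"
    by (intro inj_onI) (metis e_inner lessThan_iff zero_neq_one)
  show on: "orthonormal (e ` {..<r})"
    by (auto simp: orthonormal_def pairwise_def orthogonal_def norm_eq_1 e_inner)
  have "e ` {..<r} \<subseteq> V" "card (e ` {..<r}) = dim V"
    using e inj by (auto simp: orthonormal_basis_of_def card_image)
  then show "span (e ` {..<r}) = V"
    using card_eq_dim orthonormal_imp_independent[OF on] V
    by (metis finite_imageI finite_lessThan span_minimal subset_antisym)
qed

lemma chen_pair_inequality_subspace:
  fixes T :: "'a::euclidean_space \<Rightarrow> 'a \<Rightarrow> 'b::real_inner"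
  assumes V: "subspace V" and e: "orthonormal_basis_of V r e" and T: "bilinear T"
    and sym: "\<forall>u\<in>V. \<forall>v\<in>V. T u v = T v u"
    and uv: "u \<in> V" "v \<in> V" "norm u = 1" "norm v = 1" "u \<bullet> v = 0"
  shows "(norm (T u v))\<^sup>2 - T u u \<bullet> T v v
    \<le> (\<Sum>i<r. \<Sum>j<r. (norm (T (e i) (e j)))\<^sup>2) / 2
      - (norm (\<Sum>i<r. T (e i) (e i)))\<^sup>2 / (2 * (real r - 1))"
proof -
  obtain B' where B': "finite B'" "u \<notin> B'" "v \<notin> B'"
    and B: "orthonormal (insert u (insert v B'))" "span (insert u (insert v B')) = V"
    using orthonormal_pair_extend[OF V uv] .
  let ?B = "insert u (insert v B')"
  let ?E = "e ` {..<r}"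
  have E: "orthonormal ?E" "finite ?E" "span ?B = span ?E"
    using B orthonormal_basis_ofD[OF V e] by auto
  have "u \<noteq> v"
    using uv by auto
  have "card ?B = r"
    using e B dim_span_eq_card_independent[OF orthonormal_imp_independent[OF B(1)]]
    by (simp add: orthonormal_basis_of_def)
  then have "card B' + 2 = r"
    using B' \<open>u \<noteq> v\<close> by simp
  then have "(norm (T u v))\<^sup>2 - T u u \<bullet> T v v
      \<le> (\<Sum>x\<in>?B. \<Sum>y\<in>?B. (norm (T x y))\<^sup>2) / 2 - (norm (\<Sum>x\<in>?B. T x x))\<^sup>2 / (2 * (real r - 1))"
    using B' \<open>u \<noteq> v\<close> sym uv by (intro chen_pair_inequality) auto
  moreover have "(\<Sum>x\<in>?B. \<Sum>y\<in>?B. (norm (T x y))\<^sup>2) = (\<Sum>x\<in>?E. \<Sum>y\<in>?E. (norm (T x y))\<^sup>2)"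
    using B'(1) by (intro hilbert_schmidt_orthonormal_basis_independent[OF T B(1) _ E]) simp
  moreover have "(\<Sum>x\<in>?B. T x x) = (\<Sum>x\<in>?E. T x x)"
    using B'(1) by (intro trace_orthonormal_basis_independent[OF T B(1) _ E]) simp
  ultimately show ?thesis
    using orthonormal_basis_ofD(1)[OF V e] by (simp add: sum.reindex)
qed

lemma linear_abs_le_sum_Basis:
  fixes f :: "'a::euclidean_space \<Rightarrow> real"
  assumes "linear f" "norm x \<le> 1"
  shows "\<bar>f x\<bar> \<le> (\<Sum>i\<in>Basis. \<bar>f i\<bar>)"
proof -
  have "f x = (\<Sum>i\<in>Basis. (x \<bullet> i) * f i)"
    using assms(1) by (subst euclidean_representation[symmetric, of x]) (simp add: linear_sum linear_scale)
  also have "\<bar>\<dots>\<bar> \<le> (\<Sum>i\<in>Basis. \<bar>(x \<bullet> i) * f i\<bar>)"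
    by (rule sum_abs)
  also have "\<dots> \<le> (\<Sum>i\<in>Basis. \<bar>f i\<bar>)"
  proof (rule sum_mono)
    fix i :: 'a assume "i \<in> Basis"
    then have "\<bar>x \<bullet> i\<bar> \<le> 1"
      using Basis_le_norm[of i x] assms(2) by simp
    then show "\<bar>(x \<bullet> i) * f i\<bar> \<le> \<bar>f i\<bar>"
      by (simp add: abs_mult mult_left_le_one_le)
  qed
  finally show ?thesis .
qed

lemma quadrilinear_abs_le:
  fixes R :: "'a::euclidean_space \<Rightarrow> 'a \<Rightarrow> 'a \<Rightarrow> 'a \<Rightarrow> real"
  assumes R: "quadrilinear R" and "norm w \<le> 1" "norm x \<le> 1" "norm y \<le> 1" "norm z \<le> 1"
  shows "\<bar>R w x y z\<bar> \<le> (\<Sum>i\<in>Basis. \<Sum>j\<in>Basis. \<Sum>k\<in>Basis. \<Sum>l\<in>Basis. \<bar>R i j k l\<bar>)"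
proof -
  have lin: "linear (\<lambda>w. R w x y z)" "linear (\<lambda>x. R w x y z)"
    "linear (\<lambda>y. R w x y z)" "linear (\<lambda>z. R w x y z)" for w x y z
    using R by (simp_all add: quadrilinear_def)
  have "\<bar>R w x y z\<bar> \<le> (\<Sum>i\<in>Basis. \<bar>R i x y z\<bar>)"
    by (rule linear_abs_le_sum_Basis[OF lin(1) assms(2)])
  also have "\<dots> \<le> (\<Sum>i\<in>Basis. \<Sum>j\<in>Basis. \<bar>R i j y z\<bar>)"
    by (intro sum_mono linear_abs_le_sum_Basis[OF lin(2) assms(3)])
  also have "\<dots> \<le> (\<Sum>i\<in>Basis. \<Sum>j\<in>Basis. \<Sum>k\<in>Basis. \<bar>R i j k z\<bar>)"
    by (intro sum_mono linear_abs_le_sum_Basis[OF lin(3) assms(4)])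
  also have "\<dots> \<le> (\<Sum>i\<in>Basis. \<Sum>j\<in>Basis. \<Sum>k\<in>Basis. \<Sum>l\<in>Basis. \<bar>R i j k l\<bar>)"
    by (intro sum_mono linear_abs_le_sum_Basis[OF lin(4) assms(5)])
  finally show ?thesis .
qed

lemma sup_K_V_le_add:
  fixes R R' :: "'a::euclidean_space \<Rightarrow> 'a \<Rightarrow> 'a \<Rightarrow> 'a \<Rightarrow> real"
  assumes R: "quadrilinear R"
    and nonempty: "u\<^sub>0 \<in> V" "v\<^sub>0 \<in> V" "norm u\<^sub>0 = 1" "norm v\<^sub>0 = 1" "u\<^sub>0 \<bullet> v\<^sub>0 = 0"
    and le: "\<And>u v. u \<in> V \<Longrightarrow> v \<in> V \<Longrightarrow> norm u = 1 \<Longrightarrow> norm v = 1 \<Longrightarrow> u \<bullet> v = 0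
      \<Longrightarrow> R' u v v u \<le> R u v v u + C"
  shows "sup_K_V R' V \<le> sup_K_V R V + C"
  unfolding sup_K_V_def
proof (rule cSup_least)
  let ?K = "{R u v v u |u v. u \<in> V \<and> v \<in> V \<and> norm u = 1 \<and> norm v = 1 \<and> u \<bullet> v = 0}"
  have "bdd_above ?K"
  proof (rule bdd_aboveI)
    fix k assume "k \<in> ?K"
    then obtain u v where "k = R u v v u" "norm u = 1" "norm v = 1"
      by blast
    then show "k \<le> (\<Sum>i\<in>Basis. \<Sum>j\<in>Basis. \<Sum>k\<in>Basis. \<Sum>l\<in>Basis. \<bar>R i j k l\<bar>)"
      using quadrilinear_abs_le[OF R, of u v v u] by simp
  qed
  fix x
  assume "x \<in> {R' u v v u |u v. u \<in> V \<and> v \<in> V \<and> norm u = 1 \<and> norm v = 1 \<and> u \<bullet> v = 0}"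
  then obtain u v where uv: "u \<in> V" "v \<in> V" "norm u = 1" "norm v = 1" "u \<bullet> v = 0"
    and x: "x = R' u v v u"
    by blast
  have "R u v v u \<le> Sup ?K"
    using uv by (intro cSup_upper[OF _ \<open>bdd_above ?K\<close>]) blast
  then show "x \<le> Sup ?K + C"
    using le[OF uv] x by linarith
qed (use nonempty in blast)

lemma Rker_sectional:
  assumes "T v u = T u v"
  shows "Rker R T u v v u = R u v v u - T u u \<bullet> T v v + (norm (T u v))\<^sup>2"
  using assms by (simp add: Rker_def power2_norm_eq_inner)

lemma tau_V_Rker:
  assumes sym: "\<And>i j. i < r \<Longrightarrow> j < r \<Longrightarrow> T (e j) (e i) = T (e i) (e j)"
  shows "tau_V (Rker R T) r e = tau_V R r e - (norm (\<Sum>i<r. T (e i) (e i)))\<^sup>2 / 2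
    + (\<Sum>i<r. \<Sum>j<r. (norm (T (e i) (e j)))\<^sup>2) / 2"
proof -
  have "(norm (\<Sum>i<r. T (e i) (e i)))\<^sup>2 = (\<Sum>i<r. \<Sum>j<r. T (e i) (e i) \<bullet> T (e j) (e j))"
    by (simp add: power2_norm_eq_inner inner_sum_left inner_sum_right) (rule sum.swap)
  then show ?thesis
    using sym by (simp add: tau_V_def Rker_sectional sum_subtractf sum.distrib field_simps)
qed

theorem mainTheorem2:
  fixes Vp :: "'a::euclidean_space set"
    and T :: "'a \<Rightarrow> 'a \<Rightarrow> 'a"
    and R :: "'a \<Rightarrow> 'a \<Rightarrow> 'a \<Rightarrow> 'a \<Rightarrow> real"
    and e :: "nat \<Rightarrow> 'a"
    and r :: nat
  assumes "subspace Vp"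
    and "orthonormal_basis_of Vp r e"
    and "r > 2"
    and "bilinear T"
    and "\<forall>u\<in>Vp. \<forall>v\<in>Vp. \<forall>w\<in>Vp. inner (T u v) w = 0"
    and "\<forall>u\<in>Vp. \<forall>v\<in>Vp. T u v = T v u"
    and "curvature_like R"
  shows "delta_hat_V2 R T Vp r e
           \<ge> tau_V R r e - sup_K_V R Vp
              - (real r ^ 2 * (real r - 2)) / (2 * (real r - 1)) * (norm (mean_curv T r e))\<^sup>2"
proof -
  define A where "A = (\<Sum>i<r. T (e i) (e i))"
  define S where "S = (\<Sum>i<r. \<Sum>j<r. (norm (T (e i) (e j)))\<^sup>2)"
  define C where "C = S / 2 - (norm A)\<^sup>2 / (2 * (real r - 1))"
  have quad: "quadrilinear R"
    using assms(7) by (simp add: curvature_like_def)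
  have pair: "e 0 \<in> Vp" "e 1 \<in> Vp" "norm (e 0) = 1" "norm (e 1) = 1" "e 0 \<bullet> e 1 = 0"
    using assms(2,3) by (auto simp: orthonormal_basis_of_def norm_eq_1)
  have "sup_K_V (Rker R T) Vp \<le> sup_K_V R Vp + C"
  proof (rule sup_K_V_le_add[OF quad pair])
    fix u v assume uv: "u \<in> Vp" "v \<in> Vp" "norm u = 1" "norm v = 1" "u \<bullet> v = 0"
    show "Rker R T u v v u \<le> R u v v u + C"
      using chen_pair_inequality_subspace[OF assms(1,2,4,6) uv] assms(6) uv
      by (simp add: Rker_sectional A_def S_def C_def)
  qed
  moreover have "tau_V (Rker R T) r e = tau_V R r e - (norm A)\<^sup>2 / 2 + S / 2"
    unfolding A_def S_def using assms(2,6) by (intro tau_V_Rker) (auto simp: orthonormal_basis_of_def)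
  moreover have "(norm (mean_curv T r e))\<^sup>2 = (norm A)\<^sup>2 / (real r)\<^sup>2"
    by (simp add: mean_curv_def A_def power_divide)
  moreover have "real r ^ 2 * (real r - 2) / (2 * (real r - 1)) * ((norm A)\<^sup>2 / (real r)\<^sup>2)
      = (norm A)\<^sup>2 / 2 - (norm A)\<^sup>2 / (2 * (real r - 1))"
    using assms(3) by (simp add: field_simps power2_eq_square)
  ultimately show ?thesis
    by (simp add: delta_hat_V2_def C_def)
qed

end
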